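(* Let $\mathcal{F}=\{e_j\}_{j=1}^N$ be a unit-norm tight frame of $\mathbb{R}^d$ with $F=[e_1,\dots,e_N]$, and let $\delta>0$. Model the quantization errors as in the White Noise Hypothesis: let $\eta_1,\dots,\eta_N$ be independent random variables, each uniformly distributed on $[-\delta/2,\delta/2)$, and let the reconstruction error be the random vector $\mathrm{Err}:=\frac dN\sum_{j=1}^N\eta_je_j$. Then for every $\varepsilon\in(0,1/2)$, $$\Pr\Bigl(\|\mathrm{Err}\|\le \frac{d\,\delta}{N^{1/2-\varepsilon}}\bigl(\sigma(F)+1\bigr)\Bigr)\ge 1-2N\exp(-2N^{2\varepsilon}).$$
   Context: A finite family $\{e_j\}_{j=1}^N\subset\mathbb{R}^d$ is a unit-norm tight frame if $\|e_j\|=1$ and $\sum_j e_je_j^T=\frac Nd I_d$. The variation of $F=[e_1,\dots,e_N]$ is $\sigma(F):=\min_{p}\sum_{j=1}^{N-1}\|e_{p(j)}-e_{p(j+1)}\|$, the minimum over all permutations $p$ of $\{1,\dots,N\}$. *)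

theory Defs
  imports "HOL-Probability.Probability"
begin

text \<open>Frame vectors are indexed by j = 0..N-1 (the paper uses 1..N).\<close>

definition unit_norm_tight_frame :: "nat \<Rightarrow> (nat \<Rightarrow> real^'d) \<Rightarrow> bool" where
  "unit_norm_tight_frame N e \<longleftrightarrow>
     (\<forall>j<N. norm (e j) = 1) \<and>
     (\<Sum>j<N. (\<chi> i k. e j $ i * e j $ k)) = (real N / real CARD('d)) *\<^sub>R (mat 1 :: real^'d^'d)"

definition frame_variation :: "nat \<Rightarrow> (nat \<Rightarrow> real^'d) \<Rightarrow> real" where
  "frame_variation N e =
     Min {(\<Sum>j<N - 1. norm (e (p j) - e (p (j + 1)))) | p. p permutes {..<N}}"

definition recon_error :: "nat \<Rightarrow> (nat \<Rightarrow> real^'d) \<Rightarrow> (nat \<Rightarrow> real) \<Rightarrow> real^'d" where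
  "recon_error N e \<eta> = (real CARD('d) / real N) *\<^sub>R (\<Sum>j<N. \<eta> j *\<^sub>R e j)"

end

theory Submission
  imports Defs
begin

text \<open>
  Order the frame vectors along a permutation \<open>p\<close> that attains the frame variation
  \<open>\<sigma>(F)\<close>. Summation by parts bounds \<open>\<parallel>\<Sum>\<^sub>j \<eta>\<^sub>j e\<^sub>j\<parallel>\<close> by \<open>t (\<sigma>(F) + 1)\<close> as soon as every
  partial sum \<open>\<bar>\<eta>\<^bsub>p 0\<^esub> + \<dots> + \<eta>\<^bsub>p k\<^esub>\<bar>\<close> is at most \<open>t\<close>. With \<open>t = \<delta> N\<^bsup>1/2+\<epsilon>\<^esup>\<close> and the
  factor \<open>d/N\<close> this is exactly the bound of the theorem. Each partial sum is a sum of at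
  most \<open>N\<close> independent centred variables of range \<open>\<delta>\<close>, so by Hoeffding's inequality it
  exceeds \<open>t\<close> with probability at most \<open>2 exp (-2 N\<^bsup>2\<epsilon>\<^esup>)\<close>; a union bound over the \<open>N\<close>
  partial sums finishes the proof. The argument uses only the unit norm of the frame
  vectors (not tightness) and works for every \<open>\<epsilon>\<close>, not only for \<open>0 < \<epsilon> < 1/2\<close>.
\<close>

lemma abel_summation:
  fixes a :: "nat \<Rightarrow> real" and v :: "nat \<Rightarrow> 'a::real_vector"
  shows "(\<Sum>j<Suc n. a j *\<^sub>R v j)
           = (\<Sum>k<n. (\<Sum>j\<le>k. a j) *\<^sub>R (v k - v (Suc k))) + (\<Sum>j\<le>n. a j) *\<^sub>R v n"
proof (induction n)
  case 0
  then show ?case by simp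
next
  case (Suc n)
  have "(\<Sum>j<Suc (Suc n). a j *\<^sub>R v j) = (\<Sum>j<Suc n. a j *\<^sub>R v j) + a (Suc n) *\<^sub>R v (Suc n)"
    by simp
  also have "\<dots> = (\<Sum>k<n. (\<Sum>j\<le>k. a j) *\<^sub>R (v k - v (Suc k)))
                    + (\<Sum>j\<le>n. a j) *\<^sub>R v n + a (Suc n) *\<^sub>R v (Suc n)"
    using Suc by simp
  also have "\<dots> = (\<Sum>k<Suc n. (\<Sum>j\<le>k. a j) *\<^sub>R (v k - v (Suc k)))
                    + (\<Sum>j\<le>Suc n. a j) *\<^sub>R v (Suc n)"
    by (simp add: algebra_simps)
  finally show ?case .
qed

lemma norm_sum_le_partial_sums_variation:
  fixes a :: "nat \<Rightarrow> real" and v :: "nat \<Rightarrow> 'a::real_normed_vector"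
  assumes partial: "\<And>k. k \<le> n \<Longrightarrow> \<bar>\<Sum>j\<le>k. a j\<bar> \<le> t" and last: "norm (v n) \<le> 1"
  shows "norm (\<Sum>j<Suc n. a j *\<^sub>R v j) \<le> t * ((\<Sum>k<n. norm (v k - v (Suc k))) + 1)"
proof -
  have "norm (\<Sum>j<Suc n. a j *\<^sub>R v j)
          \<le> norm (\<Sum>k<n. (\<Sum>j\<le>k. a j) *\<^sub>R (v k - v (Suc k))) + norm ((\<Sum>j\<le>n. a j) *\<^sub>R v n)"
    unfolding abel_summation by (rule norm_triangle_ineq)
  also have "norm (\<Sum>k<n. (\<Sum>j\<le>k. a j) *\<^sub>R (v k - v (Suc k))) \<le> (\<Sum>k<n. t * norm (v k - v (Suc k)))"
  proof (rule order.trans[OF norm_sum sum_mono])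
    fix k assume "k \<in> {..<n}"
    then have "\<bar>\<Sum>j\<le>k. a j\<bar> \<le> t" using partial by simp
    then show "norm ((\<Sum>j\<le>k. a j) *\<^sub>R (v k - v (Suc k))) \<le> t * norm (v k - v (Suc k))"
      by (simp add: mult_right_mono)
  qed
  also have "norm ((\<Sum>j\<le>n. a j) *\<^sub>R v n) \<le> t * 1"
    using partial[of n] last mult_mono[of "\<bar>\<Sum>j\<le>n. a j\<bar>" t "norm (v n)" 1] by simp
  finally show ?thesis by (simp add: sum_distrib_left algebra_simps)
qed

text \<open>The frame variation is a minimum over the finitely many orderings, so some ordering attains it.\<close>

lemma frame_variation_attained:
  obtains p where "p permutes {..<N}"
    and "frame_variation N e = (\<Sum>j<N - 1. norm (e (p j) - e (p (j + 1))))"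
proof -
  let ?V = "\<lambda>p. \<Sum>j<N - 1. norm (e (p j) - e (p (j + 1)))"
  have eq: "{?V p | p. p permutes {..<N}} = ?V ` {p. p permutes {..<N}}"
    by auto
  have "Min (?V ` {p. p permutes {..<N}}) \<in> ?V ` {p. p permutes {..<N}}"
    by (intro Min_in) (auto simp: finite_permutations intro: permutes_id)
  then show ?thesis
    using that unfolding frame_variation_def eq by blast
qed

lemma norm_sum_le_variation_of_ordering:
  fixes a :: "nat \<Rightarrow> real" and e :: "nat \<Rightarrow> 'a::real_normed_vector"
  assumes p: "p permutes {..<N}" and N: "0 < N"
    and unit: "\<And>j. j < N \<Longrightarrow> norm (e j) = 1"
    and partial: "\<And>k. k < N \<Longrightarrow> \<bar>\<Sum>j\<le>k. a (p j)\<bar> \<le> t"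
  shows "norm (\<Sum>j<N. a j *\<^sub>R e j) \<le> t * ((\<Sum>j<N - 1. norm (e (p j) - e (p (j + 1)))) + 1)"
proof -
  obtain n where n: "N = Suc n"
    using N by (cases N) auto
  have "(\<Sum>j<N. a j *\<^sub>R e j) = (\<Sum>j<Suc n. a (p j) *\<^sub>R e (p j))"
    using sum.permute[OF p, of "\<lambda>j. a j *\<^sub>R e j"] n by simp
  also have "norm \<dots> \<le> t * ((\<Sum>k<n. norm (e (p k) - e (p (Suc k)))) + 1)"
    using partial unit permutes_in_image[OF p, of n] n
    by (intro norm_sum_le_partial_sums_variation) auto
  finally show ?thesis
    using n by simp
qed

lemma powr_split_half:
  fixes x \<epsilon> :: real
  assumes "0 < x"
  shows "x powr (1/2 + \<epsilon>) / x = 1 / x powr (1/2 - \<epsilon>)"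
    and "(x powr (1/2 + \<epsilon>))\<^sup>2 = x * x powr (2 * \<epsilon>)"
proof -
  have "x powr (1/2 + \<epsilon>) * x powr (1/2 - \<epsilon>) = x"
    using assms by (simp flip: powr_add)
  then show "x powr (1/2 + \<epsilon>) / x = 1 / x powr (1/2 - \<epsilon>)"
    using assms by (simp add: field_simps)
  have "(x powr (1/2 + \<epsilon>))\<^sup>2 = x powr (1 + 2 * \<epsilon>)"
    using assms powr_power[of x "1/2 + \<epsilon>" 2] by (simp add: algebra_simps)
  then show "(x powr (1/2 + \<epsilon>))\<^sup>2 = x * x powr (2 * \<epsilon>)"
    using assms by (simp add: powr_add)
qed

lemma recon_error_bound:
  fixes e :: "nat \<Rightarrow> real^'d" and a :: "nat \<Rightarrow> real"
  assumes unit: "\<And>j. j < N \<Longrightarrow> norm (e j) = 1" and N: "0 < N"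
    and p: "p permutes {..<N}"
    and sigma: "frame_variation N e = (\<Sum>j<N - 1. norm (e (p j) - e (p (j + 1))))"
    and partial: "\<And>k. k < N \<Longrightarrow> \<bar>\<Sum>j\<le>k. a (p j)\<bar> \<le> \<delta> * real N powr (1/2 + \<epsilon>)"
  shows "norm (recon_error N e a)
           \<le> real CARD('d) * \<delta> / real N powr (1/2 - \<epsilon>) * (frame_variation N e + 1)"
proof -
  have "norm (recon_error N e a) = real CARD('d) / real N * norm (\<Sum>j<N. a j *\<^sub>R e j)"
    unfolding recon_error_def by simp
  also have "\<dots> \<le> real CARD('d) / real N * (\<delta> * real N powr (1/2 + \<epsilon>) * (frame_variation N e + 1))"
    using norm_sum_le_variation_of_ordering[OF p N unit partial] sigma
    by (intro mult_left_mono) auto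
  also have "\<dots> = real CARD('d) * \<delta> * (real N powr (1/2 + \<epsilon>) / real N) * (frame_variation N e + 1)"
    by simp
  also have "\<dots> = real CARD('d) * \<delta> / real N powr (1/2 - \<epsilon>) * (frame_variation N e + 1)"
    using N by (simp add: powr_split_half(1))
  finally show ?thesis .
qed

text \<open>The half-open and the closed interval carry the same uniform distribution,
  since they differ by a Lebesgue null set.\<close>

lemma uniform_measure_atLeastLessThan:
  fixes a b :: real
  assumes "a < b"
  shows "uniform_measure lborel {a..<b} = uniform_measure lborel {a..b}"
proof -
  have "AE x in lborel. indicator {a..<b} x = (indicator {a..b} x :: ennreal)"
    using AE_lborel_singleton[of b] by eventually_elim (auto split: split_indicator)
  then show ?thesis
    unfolding uniform_measure_def using assms by (intro density_cong) auto
qed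

text \<open>A variable uniform on \<open>[a, b)\<close> has the density that the library uses for the uniform
  distribution on \<open>[a, b]\<close>; this gives access to its expectation \<open>(a + b) / 2\<close>.\<close>

lemma (in prob_space) uniform_distributed_closed:
  fixes X :: "'a \<Rightarrow> real"
  assumes X: "X \<in> borel_measurable M" and ab: "a < b"
    and D: "distr M lborel X = uniform_measure lborel {a..<b}"
  shows "distributed M lborel X (\<lambda>x. indicator {a..b} x / measure lborel {a..b})"
  unfolding distributed_def
proof (intro conjI)
  have "distr M lborel X = uniform_measure lborel {a..b}"
    using D uniform_measure_atLeastLessThan[OF ab] by simp
  also have "\<dots> = density lborel (\<lambda>x. indicator {a..b} x / measure lborel {a..b})"
    unfolding uniform_measure_def using ab divide_ennreal[of 1 "b - a"]
    by (intro density_cong) (auto split: split_indicator)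
  finally show "distr M lborel X = density lborel (\<lambda>x. indicator {a..b} x / measure lborel {a..b})" .
qed (use X in auto)

lemma (in prob_space) uniform_AE_in_interval:
  fixes X :: "'a \<Rightarrow> real"
  assumes X: "X \<in> borel_measurable M" and ab: "a < b"
    and D: "distr M lborel X = uniform_measure lborel {a..<b}"
  shows "AE x in M. X x \<in> {a..b}"
proof -
  have "AE x in distr M lborel X. x \<in> {a..b}"
    unfolding D by (rule AE_uniform_measureI) auto
  then show ?thesis
    using X by (subst (asm) AE_distr_iff) auto
qed

lemma (in prob_space) hoeffding_uniform:
  fixes X :: "'i \<Rightarrow> 'a \<Rightarrow> real" and a b t :: real
  assumes indep: "indep_vars (\<lambda>_. borel) X I" and fin: "finite I" and ne: "I \<noteq> {}"
    and unif: "\<And>i. i \<in> I \<Longrightarrow> distr M lborel (X i) = uniform_measure lborel {a..<b}"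
    and ab: "a < b" and t: "t \<ge> 0"
  shows "prob {x \<in> space M. t \<le> \<bar>(\<Sum>i\<in>I. X i x) - card I * (a + b) / 2\<bar>}
           \<le> 2 * exp (- 2 * t\<^sup>2 / (card I * (b - a)\<^sup>2))"
proof -
  have meas: "X i \<in> borel_measurable M" if "i \<in> I" for i
    using indep that unfolding indep_vars_def by auto
  interpret Hoeffding_ineq M I X "\<lambda>_. a" "\<lambda>_. b" "\<Sum>i\<in>I. expectation (X i)"
    using fin indep uniform_AE_in_interval[OF meas ab unif] by unfold_locales auto
  have centre: "expectation (X i) = (a + b) / 2" if "i \<in> I" for i
    using uniform_distributed_expectation[OF uniform_distributed_closed[OF meas ab unif]] that
    by simp
  have mean: "(\<Sum>i\<in>I. expectation (X i)) = card I * (a + b) / 2"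
    using sum.cong[OF refl centre] by simp
  have width: "(\<Sum>i\<in>I. (b - a)\<^sup>2) = card I * (b - a)\<^sup>2"
    by simp
  have "0 < card I * (b - a)\<^sup>2"
    using fin ne ab by (simp add: card_gt_0_iff)
  then show ?thesis
    using Hoeffding_ineq_abs_ge[OF t] unfolding mean width by simp
qed

text \<open>Each partial sum along an ordering exceeds \<open>\<delta> N\<^bsup>1/2+\<epsilon>\<^esup>\<close> with probability at most
  \<open>2 exp (-2 N\<^bsup>2\<epsilon>\<^esup>)\<close>: Hoeffding with at most \<open>N\<close> terms of range \<open>\<delta>\<close>.\<close>

lemma (in prob_space) partial_sum_tail:
  fixes \<eta> :: "nat \<Rightarrow> 'a \<Rightarrow> real"
  assumes indep: "indep_vars (\<lambda>_. borel) \<eta> {..<N}"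
    and unif: "\<And>j. j < N \<Longrightarrow> distr M lborel (\<eta> j) = uniform_measure lborel {-\<delta>/2..<\<delta>/2}"
    and delta: "0 < \<delta>" and p: "p permutes {..<N}" and k: "k < N"
  shows "prob {\<omega> \<in> space M. \<delta> * real N powr (1/2 + \<epsilon>) \<le> \<bar>\<Sum>j\<le>k. \<eta> (p j) \<omega>\<bar>}
           \<le> 2 * exp (- 2 * real N powr (2 * \<epsilon>))"
proof -
  define I where "I = p ` {..k}"
  define t where "t = \<delta> * real N powr (1/2 + \<epsilon>)"
  have inj: "inj_on p {..k}"
    by (rule inj_on_subset[OF permutes_inj[OF p]]) simp
  have I_sub: "I \<subseteq> {..<N}"
    using k permutes_in_image[OF p] unfolding I_def by (simp add: image_subset_iff)
  have card_I: "card I = Suc k"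
    unfolding I_def using inj by (simp add: card_image)
  have reindex: "(\<Sum>j\<le>k. \<eta> (p j) \<omega>) = (\<Sum>i\<in>I. \<eta> i \<omega>)" for \<omega>
    unfolding I_def using inj by (simp add: sum.reindex)
  have "prob {\<omega> \<in> space M. t \<le> \<bar>(\<Sum>i\<in>I. \<eta> i \<omega>) - card I * (- \<delta>/2 + \<delta>/2) / 2\<bar>}
          \<le> 2 * exp (- 2 * t\<^sup>2 / (card I * (\<delta>/2 - - \<delta>/2)\<^sup>2))"
    by (rule hoeffding_uniform[OF indep_vars_subset[OF indep I_sub]])
      (use unif I_sub delta card_I finite_subset[OF I_sub] in \<open>auto simp: t_def\<close>)
  also have "\<dots> = 2 * exp (- 2 * (t\<^sup>2 / (real (Suc k) * \<delta>\<^sup>2)))"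
    using card_I by simp
  also have "\<dots> \<le> 2 * exp (- 2 * (t\<^sup>2 / (real N * \<delta>\<^sup>2)))"
  proof -
    have "t\<^sup>2 / (real N * \<delta>\<^sup>2) \<le> t\<^sup>2 / (real (Suc k) * \<delta>\<^sup>2)"
      using k delta by (intro divide_left_mono mult_right_mono mult_pos_pos) auto
    then show ?thesis by simp
  qed
  also have "t\<^sup>2 / (real N * \<delta>\<^sup>2) = real N powr (2 * \<epsilon>)"
    using k delta powr_split_half(2)[of "real N" \<epsilon>] unfolding t_def power_mult_distrib by simp
  finally show ?thesis
    unfolding t_def reindex by simp
qed

lemma (in prob_space) random_sum_events:
  fixes X :: "nat \<Rightarrow> 'a \<Rightarrow> real" and e :: "nat \<Rightarrow> real^'d"
  assumes meas: "\<And>j. j < N \<Longrightarrow> X j \<in> borel_measurable M"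
  shows "{\<omega> \<in> space M. norm (recon_error N e (\<lambda>j. X j \<omega>)) \<le> B} \<in> events"
    and "p permutes {..<N} \<Longrightarrow> k < N \<Longrightarrow> {\<omega> \<in> space M. t \<le> \<bar>\<Sum>j\<le>k. X (p j) \<omega>\<bar>} \<in> events"
proof -
  have "(\<lambda>\<omega>. \<Sum>j<N. X j \<omega> *\<^sub>R e j) \<in> borel_measurable M"
    using meas by (intro borel_measurable_sum) auto
  then show "{\<omega> \<in> space M. norm (recon_error N e (\<lambda>j. X j \<omega>)) \<le> B} \<in> events"
    unfolding recon_error_def by measurable
next
  assume p: "p permutes {..<N}" and k: "k < N"
  have "(\<lambda>\<omega>. \<Sum>j\<le>k. X (p j) \<omega>) \<in> borel_measurable M"
    using meas permutes_in_image[OF p] k by (intro borel_measurable_sum) auto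
  then show "{\<omega> \<in> space M. t \<le> \<bar>\<Sum>j\<le>k. X (p j) \<omega>\<bar>} \<in> events"
    by measurable
qed

lemma (in prob_space) prob_ge_by_union_bound:
  assumes G: "G \<in> events" and A: "\<And>k. k < n \<Longrightarrow> A k \<in> events"
    and cover: "space M - (\<Union>k<n. A k) \<subseteq> G"
    and small: "\<And>k. k < n \<Longrightarrow> prob (A k) \<le> q"
  shows "1 - real n * q \<le> prob G"
proof -
  have "prob (\<Union>k<n. A k) \<le> (\<Sum>k<n. prob (A k))"
    using A by (intro finite_measure_subadditive_finite) auto
  also have "\<dots> \<le> real n * q"
    using sum_mono[of "{..<n}" "\<lambda>k. prob (A k)" "\<lambda>_. q"] small by simp
  finally have "1 - real n * q \<le> prob (space M - (\<Union>k<n. A k))"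
    using A by (subst prob_compl) auto
  also have "\<dots> \<le> prob G"
    using G cover by (intro finite_measure_mono) auto
  finally show ?thesis .
qed

theorem theorem3p1:
  fixes N :: nat and e :: "nat \<Rightarrow> real^'d" and \<delta> \<epsilon> :: real
    and M :: "'w measure" and \<eta> :: "nat \<Rightarrow> 'w \<Rightarrow> real"
  assumes frame: "unit_norm_tight_frame N e"
    and delta: "\<delta> > 0"
    and P: "prob_space M"
    and indep: "prob_space.indep_vars M (\<lambda>_. borel) \<eta> {..<N}"
    and unif: "\<And>j. j < N \<Longrightarrow> distr M lborel (\<eta> j) = uniform_measure lborel {-\<delta>/2..<\<delta>/2}"
    and eps: "0 < \<epsilon>" "\<epsilon> < 1/2"
  shows "measure M {\<omega> \<in> space M.
            norm (recon_error N e (\<lambda>j. \<eta> j \<omega>))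
              \<le> real CARD('d) * \<delta> / real N powr (1/2 - \<epsilon>) * (frame_variation N e + 1)}
         \<ge> 1 - 2 * real N * exp (- 2 * real N powr (2 * \<epsilon>))"
proof (cases "N = 0")
  case True
  then show ?thesis
    using prob_space.prob_space[OF P] by (simp add: recon_error_def)
next
  case False
  interpret prob_space M by (rule P)
  have meas: "\<eta> j \<in> borel_measurable M" if "j < N" for j
    using indep that unfolding indep_vars_def by auto
  have unit: "norm (e j) = 1" if "j < N" for j
    using frame that unfolding unit_norm_tight_frame_def by auto
  obtain p where p: "p permutes {..<N}"
    and sigma: "frame_variation N e = (\<Sum>j<N - 1. norm (e (p j) - e (p (j + 1))))"
    by (rule frame_variation_attained)
  \<comment> \<open>Outside the union of the events where some partial sum along \<open>p\<close> is large,
    the deterministic bound applies.\<close>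
  define bad where "bad k = {\<omega> \<in> space M. \<delta> * real N powr (1/2 + \<epsilon>) \<le> \<bar>\<Sum>j\<le>k. \<eta> (p j) \<omega>\<bar>}"
    for k
  have "1 - real N * (2 * exp (- 2 * real N powr (2 * \<epsilon>)))
          \<le> prob {\<omega> \<in> space M. norm (recon_error N e (\<lambda>j. \<eta> j \<omega>))
                 \<le> real CARD('d) * \<delta> / real N powr (1/2 - \<epsilon>) * (frame_variation N e + 1)}"
    (is "_ \<le> prob ?good")
  proof (rule prob_ge_by_union_bound[where A = bad])
    show "space M - (\<Union>k<N. bad k) \<subseteq> ?good"
    proof
      fix \<omega> assume \<omega>: "\<omega> \<in> space M - (\<Union>k<N. bad k)"
      then have "\<bar>\<Sum>j\<le>k. \<eta> (p j) \<omega>\<bar> \<le> \<delta> * real N powr (1/2 + \<epsilon>)" if "k < N" for k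
        using that by (force simp: bad_def)
      then show "\<omega> \<in> ?good"
        using recon_error_bound[OF unit _ p sigma, of "\<lambda>j. \<eta> j \<omega>"] \<omega> False by auto
    qed
    show "?good \<in> events"
      by (rule random_sum_events(1)[OF meas])
    show "bad k \<in> events" if "k < N" for k
      unfolding bad_def by (rule random_sum_events(2)[OF meas p that])
    show "prob (bad k) \<le> 2 * exp (- 2 * real N powr (2 * \<epsilon>))" if "k < N" for k
      unfolding bad_def by (rule partial_sum_tail[OF indep unif delta p that])
  qed
  then show ?thesis
    by (simp add: mult.assoc)
qed

end
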